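(* Let $n\ge1$, $a\in[-\infty,+\infty)$, $b\in(-\infty,+\infty]$ with $a\le b$, and $\mathbf y\in\mathbb R^n$. Let $\boldsymbol\theta^*$ be the unique minimizer of $\|\mathbf y-\mathbf v\|_2^2$ over $\mathbf v\in\mathcal S_n^\uparrow$, and $\boldsymbol\theta$ the unique minimizer of $\|\mathbf y-\mathbf v\|_2^2$ over $\mathbf v\in\mathcal S_n^\uparrow(a,b)$, where $\mathcal S_n^\uparrow(a,b)=\{\mathbf v\in\mathcal S_n^\uparrow: a\le v_1,\ v_n\le b\}$. Then $k(\boldsymbol\theta)\le k(\boldsymbol\theta^* )$.
   Context: $\mathcal S_n^\uparrow=\{\mathbf u\in\mathbb R^n:u_1\le\dots\le u_n\}$. For $\mathbf u\in\mathbb R^n$, $k(\mathbf u)=|\{u_1,\dots,u_n\}|$, the number of distinct values of $\mathbf u$. *)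

theory Defs
  imports Complex_Main "HOL-Library.Extended_Real"
begin

text \<open>Vectors in R^n are represented as real lists of length n; entry u_i is u ! (i-1).\<close>

definition mono_cone :: "nat \<Rightarrow> real list set" where
  "mono_cone n = {u. length u = n \<and> (\<forall>i j. i \<le> j \<longrightarrow> j < n \<longrightarrow> u ! i \<le> u ! j)}"

definition bounded_mono_cone :: "nat \<Rightarrow> ereal \<Rightarrow> ereal \<Rightarrow> real list set" where
  "bounded_mono_cone n a b =
     {u \<in> mono_cone n. a \<le> ereal (u ! 0) \<and> ereal (u ! (n - 1)) \<le> b}"

definition sqdist :: "real list \<Rightarrow> real list \<Rightarrow> real" where
  "sqdist y v = (\<Sum>i<length y. (y ! i - v ! i)^2)"

definition is_minimizer_on :: "real list set \<Rightarrow> real list \<Rightarrow> real list \<Rightarrow> bool" where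
  "is_minimizer_on S y t \<longleftrightarrow> t \<in> S \<and> (\<forall>v\<in>S. sqdist y t \<le> sqdist y v)"

definition num_distinct :: "real list \<Rightarrow> nat" where
  "num_distinct u = card (set u)"

end

theory Submission
  imports Defs
begin

text \<open>The bounded isotonic fit is obtained by clipping the unbounded one to \<open>[a, b]\<close>:
  \<open>c = clip(\<theta>\<^sup>*)\<close> is monotone and lies in the bounded cone, and it satisfies the variational
  inequality \<open>\<langle>y - c, w - c\<rangle> \<le> 0\<close> characterising the projection onto that cone. Indeed
  \<open>\<langle>y - c, w - c\<rangle>\<close> splits as \<open>\<langle>y - \<theta>\<^sup>*, w - \<theta>\<^sup>*\<rangle> + \<langle>y - \<theta>\<^sup>*, (2\<theta>\<^sup>* - c) - \<theta>\<^sup>*\<rangle> + \<langle>\<theta>\<^sup>* - c, w - c\<rangle>\<close>;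
  the first two terms are \<open>\<le> 0\<close> by optimality of \<open>\<theta>\<^sup>*\<close> in the monotone cone (the vector
  \<open>2\<theta>\<^sup>* - c\<close> is again monotone), and the last is \<open>\<le> 0\<close> coordinatewise because clipping is
  the projection onto \<open>[a, b]\<close>. Hence \<open>\<theta> = clip(\<theta>\<^sup>*)\<close>, and applying a function to the
  entries cannot increase the number of distinct values.\<close>

lemma sqdist_expand:
  "sqdist y w = sqdist y c - 2 * (\<Sum>i<length y. (y!i - c!i) * (w!i - c!i))
                + (\<Sum>i<length y. (w!i - c!i)^2)"
proof -
  have "(y!i - w!i)^2 = (y!i - c!i)^2 - 2 * ((y!i - c!i) * (w!i - c!i)) + (w!i - c!i)^2" for i
    by (simp add: power2_eq_square algebra_simps)
  then show ?thesis
    by (simp add: sqdist_def sum.distrib sum_subtractf sum_distrib_left)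
qed

lemma mono_cone_convex:
  assumes "t \<in> mono_cone n" "u \<in> mono_cone n" "0 \<le> s" "s \<le> 1"
  shows "map (\<lambda>i. t!i + s * (u!i - t!i)) [0..<n] \<in> mono_cone n"
  unfolding mono_cone_def
proof safe
  fix i j assume ij: "i \<le> j" "j < n"
  have "t!i \<le> t!j" "u!i \<le> u!j" using assms(1,2) ij by (auto simp: mono_cone_def)
  then have "(1 - s) * t!i + s * u!i \<le> (1 - s) * t!j + s * u!j"
    using assms(3,4) by (intro add_mono mult_left_mono) auto
  then show "map (\<lambda>i. t!i + s * (u!i - t!i)) [0..<n] ! i \<le> map (\<lambda>i. t!i + s * (u!i - t!i)) [0..<n] ! j"
    using ij by (simp add: algebra_simps)
qed simp

lemma nonpos_if_scaled_bound:
  fixes P Q :: real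
  assumes "Q \<ge> 0" and bound: "\<And>s. 0 < s \<Longrightarrow> s \<le> 1 \<Longrightarrow> 2 * P \<le> s * Q"
  shows "P \<le> 0"
proof (rule ccontr)
  assume "\<not> P \<le> 0"
  then have "P > 0" by simp
  with bound[of 1] have "Q > 0" "P < Q" by auto
  with \<open>P > 0\<close> have "2 * P \<le> (P / Q) * Q" by (intro bound) auto
  with \<open>Q > 0\<close> \<open>P > 0\<close> show False by simp
qed

lemma mono_cone_minimizer_ineq:
  assumes min: "is_minimizer_on (mono_cone n) y t" and len: "length y = n"
    and u: "u \<in> mono_cone n"
  shows "(\<Sum>i<n. (y!i - t!i) * (u!i - t!i)) \<le> 0"
proof (rule nonpos_if_scaled_bound)
  show "(\<Sum>i<n. (u!i - t!i)^2) \<ge> 0" by (intro sum_nonneg) auto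
next
  fix s :: real assume s: "0 < s" "s \<le> 1"
  define w where "w = map (\<lambda>i. t!i + s * (u!i - t!i)) [0..<n]"
  have "t \<in> mono_cone n" using min by (simp add: is_minimizer_on_def)
  with u s have "w \<in> mono_cone n" unfolding w_def by (intro mono_cone_convex) auto
  with min have "sqdist y t \<le> sqdist y w" by (auto simp: is_minimizer_on_def)
  also have "\<dots> = sqdist y t - 2 * (\<Sum>i<n. (y!i - t!i) * (s * (u!i - t!i)))
                  + (\<Sum>i<n. (s * (u!i - t!i))^2)"
    using sqdist_expand[of y w t, unfolded len] by (simp add: w_def)
  also have "\<dots> = sqdist y t - 2 * s * (\<Sum>i<n. (y!i - t!i) * (u!i - t!i))
                  + s^2 * (\<Sum>i<n. (u!i - t!i)^2)"
    by (simp add: sum_distrib_left power_mult_distrib mult.left_commute mult.assoc)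
  finally have "0 \<le> s * (s * (\<Sum>i<n. (u!i - t!i)^2) - 2 * (\<Sum>i<n. (y!i - t!i) * (u!i - t!i)))"
    by (simp add: algebra_simps power2_eq_square)
  with s show "2 * (\<Sum>i<n. (y!i - t!i) * (u!i - t!i)) \<le> s * (\<Sum>i<n. (u!i - t!i)^2)"
    by (simp add: zero_le_mult_iff)
qed

lemma bounded_mono_cone_nth_between:
  assumes "w \<in> bounded_mono_cone n a b" "i < n"
  shows "a \<le> ereal (w!i) \<and> ereal (w!i) \<le> b"
proof -
  have "w!0 \<le> w!i" "w!i \<le> w!(n - 1)" using assms by (auto simp: bounded_mono_cone_def mono_cone_def)
  moreover have "a \<le> ereal (w!0)" "ereal (w!(n - 1)) \<le> b"
    using assms(1) by (auto simp: bounded_mono_cone_def)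
  ultimately show ?thesis by (meson ereal_less_eq(3) order_trans)
qed

definition clip :: "ereal \<Rightarrow> ereal \<Rightarrow> real \<Rightarrow> real" where
  "clip a b x =
     (if ereal x < a then real_of_ereal a else if b < ereal x then real_of_ereal b else x)"

context
  fixes a b :: ereal
  assumes a_finite_top: "a \<noteq> \<infinity>" and b_finite_bot: "b \<noteq> -\<infinity>" and a_le_b: "a \<le> b"
begin

lemma clip_between: "a \<le> ereal (clip a b x) \<and> ereal (clip a b x) \<le> b"
  using a_finite_top b_finite_bot a_le_b by (cases a; cases b; auto simp: clip_def)

lemma clip_mono: "x \<le> z \<Longrightarrow> clip a b x \<le> clip a b z"
  using a_finite_top b_finite_bot a_le_b by (cases a; cases b; auto simp: clip_def)

lemma reflect_clip_mono: "x \<le> z \<Longrightarrow> 2 * x - clip a b x \<le> 2 * z - clip a b z"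
  using a_finite_top b_finite_bot a_le_b by (cases a; cases b; auto simp: clip_def)

lemma clip_projection_ineq:
  "a \<le> ereal w \<Longrightarrow> ereal w \<le> b \<Longrightarrow> (x - clip a b x) * (w - clip a b x) \<le> 0"
  using a_finite_top b_finite_bot a_le_b
  by (cases a; cases b; auto simp: clip_def mult_nonneg_nonpos mult_nonpos_nonneg)

lemma clip_mono_cone_mem:
  assumes "n \<ge> 1" "t \<in> mono_cone n"
  shows "map (clip a b) t \<in> bounded_mono_cone n a b"
proof -
  have "map (clip a b) t \<in> mono_cone n"
    using assms(2) by (auto simp: mono_cone_def intro!: clip_mono)
  with assms show ?thesis by (auto simp: bounded_mono_cone_def mono_cone_def clip_between)
qed

lemma clip_minimizer_ineq:
  assumes min: "is_minimizer_on (mono_cone n) y t" and len: "length y = n"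
    and w: "w \<in> bounded_mono_cone n a b"
  defines "c \<equiv> map (clip a b) t"
  shows "(\<Sum>i<n. (y!i - c!i) * (w!i - c!i)) \<le> 0"
proof -
  have t: "t \<in> mono_cone n" using min by (simp add: is_minimizer_on_def)
  then have lt: "length t = n" by (simp add: mono_cone_def)
  have ci: "c!i = clip a b (t!i)" if "i < n" for i using that lt by (simp add: c_def)
  define v where "v = map (\<lambda>x. 2 * x - clip a b x) t"
  have vi: "v!i = 2 * t!i - c!i" if "i < n" for i using that lt by (simp add: v_def ci)
  have "v \<in> mono_cone n"
    using t by (auto simp: mono_cone_def v_def intro!: reflect_clip_mono)
  then have reflected: "(\<Sum>i<n. (y!i - t!i) * (v!i - t!i)) \<le> 0"
    using min len by (rule mono_cone_minimizer_ineq[rotated 2])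
  have "w \<in> mono_cone n" using w by (simp add: bounded_mono_cone_def)
  then have direct: "(\<Sum>i<n. (y!i - t!i) * (w!i - t!i)) \<le> 0"
    using min len by (rule mono_cone_minimizer_ineq[rotated 2])
  have clipped: "(\<Sum>i<n. (t!i - c!i) * (w!i - c!i)) \<le> 0"
    using bounded_mono_cone_nth_between[OF w]
    by (intro sum_nonpos) (simp add: ci clip_projection_ineq)
  have "(\<Sum>i<n. (y!i - c!i) * (w!i - c!i)) =
        (\<Sum>i<n. (y!i - t!i) * (w!i - t!i)) + (\<Sum>i<n. (y!i - t!i) * (v!i - t!i))
        + (\<Sum>i<n. (t!i - c!i) * (w!i - c!i))"
    by (simp add: sum.distrib[symmetric] vi algebra_simps)
  with direct reflected clipped show ?thesis by linarith
qed

lemma bounded_minimizer_eq_clip: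
  assumes "n \<ge> 1" "is_minimizer_on (mono_cone n) y t" "is_minimizer_on (bounded_mono_cone n a b) y \<theta>"
    and len: "length y = n"
  shows "\<theta> = map (clip a b) t"
proof -
  define c where "c = map (clip a b) t"
  have t: "t \<in> mono_cone n" using assms(2) by (simp add: is_minimizer_on_def)
  have \<theta>: "\<theta> \<in> bounded_mono_cone n a b" using assms(3) by (simp add: is_minimizer_on_def)
  have "sqdist y \<theta> \<le> sqdist y c"
    using assms(3) clip_mono_cone_mem[OF assms(1) t] by (simp add: is_minimizer_on_def c_def)
  moreover have "(\<Sum>i<n. (y!i - c!i) * (\<theta>!i - c!i)) \<le> 0"
    unfolding c_def using assms(2) len \<theta> by (rule clip_minimizer_ineq)
  ultimately have "(\<Sum>i<n. (\<theta>!i - c!i)^2) \<le> 0"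
    using sqdist_expand[of y \<theta> c, unfolded len] by linarith
  then have "(\<Sum>i<n. (\<theta>!i - c!i)^2) = 0"
    by (intro antisym sum_nonneg) auto
  then have "\<forall>i\<in>{..<n}. (\<theta>!i - c!i)^2 = 0"
    by (subst (asm) sum_nonneg_eq_0_iff) auto
  moreover have "length \<theta> = n" "length c = n"
    using \<theta> t by (auto simp: bounded_mono_cone_def mono_cone_def c_def)
  ultimately show ?thesis unfolding c_def[symmetric] by (auto intro!: nth_equalityI)
qed

end

theorem mainTheorem4:
  fixes n :: nat and a b :: ereal and y \<theta>s \<theta> :: "real list"
  assumes "n \<ge> 1"
    and "a \<noteq> \<infinity>" and "b \<noteq> -\<infinity>" and "a \<le> b"
    and "length y = n"
    and "is_minimizer_on (mono_cone n) y \<theta>s"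
    and "is_minimizer_on (bounded_mono_cone n a b) y \<theta>"
  shows "num_distinct \<theta> \<le> num_distinct \<theta>s"
proof -
  have "\<theta> = map (clip a b) \<theta>s"
    using bounded_minimizer_eq_clip assms by blast
  then show ?thesis by (simp add: num_distinct_def card_image_le)
qed

end
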